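(* Let $n,G$ be positive integers with $2^n$ dividing $G$, let $H=G/2^n$, and let $X=\{A\subseteq G: |A|=H\}$. For $\mathcal A\subseteq X$ define \[\|\mathcal A\|_2=\min\{|x| : x\subseteq G \text{ and } x\not\subseteq a \text{ for all } a\in\mathcal A\}.\] Let $k$ be a natural number and let $\mathcal A\subseteq X$ be non-empty with $\|\mathcal A\|_2\geq k+1$. Then \[\frac{|\mathcal A|}{|X|}\geq \frac{(G-H)!\,(H-k)!}{(G-k)!}.\]
   Context: Natural numbers are identified with the set of their predecessors, so $G=\{0,1,\ldots,G-1\}$ and $X$ is the family of all $H$-element subsets of $G$. *)

theory Defs
  imports Complex_Main
begin

text \<open>The ground set G is identified with {0..<G}; X is the family of all H-element subsets.\<close>
definition Xfam :: "nat \<Rightarrow> nat \<Rightarrow> nat set set" where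
  "Xfam G H = {A. A \<subseteq> {..<G} \<and> card A = H}"

definition norm2 :: "nat \<Rightarrow> nat set set \<Rightarrow> nat" where
  "norm2 G \<A> = (LEAST m. \<exists>x. x \<subseteq> {..<G} \<and> (\<forall>a\<in>\<A>. \<not> x \<subseteq> a) \<and> card x = m)"

end

theory Submission
  imports Defs
begin

text \<open>Since \<open>norm2 G \<A> > k\<close>, every \<open>k\<close>-subset of the ground set lies in some member
  of \<open>\<A>\<close>, and \<open>k \<le> H\<close> because an \<open>(H + 1)\<close>-subset lies in none. Double counting the pairs
  (\<open>k\<close>-subset, member of \<open>\<A>\<close> containing it) gives \<open>(G choose k) \<le> |\<A>| (H choose k)\<close>, and
  dividing by \<open>|X| = (G choose H)\<close> yields the stated ratio of factorials.\<close>

lemma subset_of_member_if_card_less_norm2: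
  assumes "x \<subseteq> {..<G}" and "card x < norm2 G \<A>"
  shows "\<exists>a\<in>\<A>. x \<subseteq> a"
proof (rule ccontr)
  assume "\<not> (\<exists>a\<in>\<A>. x \<subseteq> a)"
  then have "norm2 G \<A> \<le> card x"
    unfolding norm2_def using assms(1) by (intro Least_le) blast
  with assms(2) show False by simp
qed

lemma norm2_le_Suc:
  assumes "H < G" and "\<A> \<subseteq> Xfam G H"
  shows "norm2 G \<A> \<le> H + 1"
proof -
  obtain x where x: "x \<subseteq> {..<G}" "card x = H + 1"
    using assms(1) obtain_subset_with_card_n[of "H + 1" "{..<G}"] by auto
  have "\<not> x \<subseteq> a" if "a \<in> \<A>" for a
  proof
    assume "x \<subseteq> a"
    moreover have "a \<subseteq> {..<G}" "card a = H"
      using that assms(2) by (auto simp: Xfam_def)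
    ultimately have "card x \<le> H"
      using card_mono finite_subset by (metis finite_lessThan)
    with x(2) show False by simp
  qed
  then show ?thesis
    unfolding norm2_def using x by (intro Least_le) blast
qed

lemma card_Xfam: "card (Xfam G H) = G choose H"
  unfolding Xfam_def using n_subsets[of "{..<G}" H] by simp

lemma finite_Xfam: "finite (Xfam G H)"
  unfolding Xfam_def by (rule finite_subset[of _ "Pow {..<G}"]) auto

lemma choose_le_card_mult_choose_if_covering:
  assumes "finite S" and "finite \<A>"
    and "\<And>a. a \<in> \<A> \<Longrightarrow> finite a \<and> card a = h"
    and "\<And>x. x \<subseteq> S \<Longrightarrow> card x = k \<Longrightarrow> \<exists>a\<in>\<A>. x \<subseteq> a"
  shows "card S choose k \<le> card \<A> * (h choose k)"
proof -
  have "card S choose k = card {x. x \<subseteq> S \<and> card x = k}"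
    using n_subsets[OF assms(1)] by simp
  also have "\<dots> \<le> card (\<Union>a\<in>\<A>. {x. x \<subseteq> a \<and> card x = k})"
    using assms by (intro card_mono) auto
  also have "\<dots> \<le> (\<Sum>a\<in>\<A>. card {x. x \<subseteq> a \<and> card x = k})"
    by (rule card_UN_le[OF assms(2)])
  also have "\<dots> = (\<Sum>a\<in>\<A>. h choose k)"
    using assms(3) n_subsets by (intro sum.cong) auto
  finally show ?thesis by simp
qed

lemma choose_quotient_eq_fact:
  assumes "k \<le> h" and "h \<le> g"
  shows "real (g choose k) / (real (h choose k) * real (g choose h))
           = fact (g - h) * fact (h - k) / fact (g - k)"
  using assms by (simp add: binomial_fact[of k g] binomial_fact[of k h] binomial_fact[of h g])

theorem proposition4p6:
  fixes n G H k :: nat and \<A> :: "nat set set"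
  assumes "n > 0" and "G > 0" and "2 ^ n dvd G"
    and "H = G div 2 ^ n"
    and "\<A> \<subseteq> Xfam G H" and "\<A> \<noteq> {}"
    and "norm2 G \<A> \<ge> k + 1"
  shows "real (card \<A>) / real (card (Xfam G H))
           \<ge> fact (G - H) * fact (H - k) / fact (G - k)"
proof -
  have "(2::nat) ^ n > 1"
    using assms(1) by (intro one_less_power) auto
  then have "H < G"
    using assms(2,4) by simp
  then have "k \<le> H"
    using order_trans[OF assms(7) norm2_le_Suc[OF _ assms(5)]] by simp
  have "finite \<A>"
    using finite_subset[OF assms(5) finite_Xfam] .
  moreover have "finite a \<and> card a = H" if "a \<in> \<A>" for a
    using that assms(5) finite_subset[of a "{..<G}"] by (auto simp: Xfam_def)
  moreover have "\<exists>a\<in>\<A>. x \<subseteq> a" if "x \<subseteq> {..<G}" and "card x = k" for x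
    using that assms(7) by (intro subset_of_member_if_card_less_norm2) auto
  ultimately have "card {..<G} choose k \<le> card \<A> * (H choose k)"
    by (intro choose_le_card_mult_choose_if_covering) auto
  then have "real (G choose k) \<le> real (card \<A>) * real (H choose k)"
    by (simp flip: of_nat_mult)
  then have "real (G choose k) / (real (H choose k) * real (G choose H))
               \<le> real (card \<A>) * real (H choose k) / (real (H choose k) * real (G choose H))"
    by (rule divide_right_mono) simp
  also have "\<dots> = real (card \<A>) / real (card (Xfam G H))"
    using \<open>k \<le> H\<close> by (simp add: card_Xfam)
  finally show ?thesis
    using choose_quotient_eq_fact[OF \<open>k \<le> H\<close>] \<open>H < G\<close> by simp
qed

end
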